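(* Let $\Phi:[0,\infty)\to[0,\infty)$ be convex and non-decreasing and let $(\mu_n)$ be a sequence of reals. Assume that, in the setting described in the context, assumptions (A1), (A2), (A3) and (A4) hold, that the function $c(v)$ in (A4) is a constant $c>0$ not depending on $v$, and that $\varphi(n):=\sup_{v\in\mathcal V_n}\varphi_v(n)\to0$ as $n\to\infty$. If, in addition, there exists $b_o>0$ such that $P(V\in\mathcal V_n)\ge b_o$ for all sufficiently large $n$, then for every constant $c_o\in(0,b_oc/8)$ and every sufficiently large $n$, $$E\,\Phi\big(|L(Z)-\mu_n|\big)\ \ge\ \Phi\Big(\frac{\epsilon_o c}{16\,\varphi(n)}\Big)\,c_o .$$
   Context: For each $n$, $Z$ is a random element of a finite set $\mathcal Z_n$ and $L:\mathcal Z_n\to\mathbb R$ is a function (a score). A random transformation $\mathcal R:\mathcal Z_n\to\mathcal Z_n$ is a random map whose randomness is independent of $Z$; for a function $g$, $E[g(\mathcal R(Z))\mid Z]$ denotes expectation over the randomness of $\mathcal R$ only. Let $\mathfrak u:\mathcal Z_n\to\mathbb Z$ and $\mathfrak v:\mathcal Z_n\to\mathbb Z^d$ be functions, $U:=\mathfrak u(Z)$, $V:=\mathfrak v(Z)$. Let $\mathcal S_n,\mathcal S_n^U,\mathcal S_n^V$ denote the supports of the laws of $(U,V)$, $U$, $V$ respectively, and for $v\in\mathcal S_n^V$ let $\mathcal S_n(v):=\{u\in\mathcal S_n^U:(u,v)\in\mathcal S_n\}$. For $(u,v)\in\mathcal S_n$ let $P_{(u,v)}$ be the law of $Z$ conditioned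 on $U=u,V=v$. A "universal constant" means one not depending on $n$. Assumptions: (A1) There exist a constant $\epsilon_o>0$ and a sequence $\Delta_n\to0$ such that $P\big(E[L(\mathcal R(Z))-L(Z)\mid Z]\ge\epsilon_o\big)\ge1-\Delta_n$. (A2) There is a constant $A<\infty$ with $L(\mathcal R(Z))-L(Z)\ge -A$ always. (A3) There exist sets $\mathcal V_n\subset\mathcal S_n^V$ and, for $v\in\mathcal V_n$, sets of consecutive integers $\mathcal U_n(v)=\{u_n(v)+1,\dots,u_n(v)+m_n(v)\}\subset\mathcal S_n(v)$ such that for every $v\in\mathcal V_n$ and $u\in\mathcal U_n(v)$: if $Z\sim P_{(u,v)}$ then $\mathcal R(Z)\sim P_{(u+1,v)}$. (A4) There exist $n_1>0$ and a function $c(v)>0$ (not depending on $n$) such that for every $n\ge n_1$ and every $v\in\mathcal V_n$, $m_n(v)\ge c(v)\varphi_v(n)^{-1}$, where $\varphi_v(n)>0$ satisfies $\min_{u\in\mathcal U_n(v)}P(U=u\mid V=v)\ge\varphi_v(n)$. *)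

theory Defs
  imports "HOL-Analysis.Analysis" "HOL-Probability.Probability"
begin

end

theory Submission
  imports Defs
begin

text \<open>On a fibre \<open>V = v\<close> the transformation moves the conditional law of \<open>Z\<close>
  from each level \<open>U = u\<close> to the next, so the conditional means of \<open>L\<close> along the \<open>m(v) \<ge> c/\<phi>(v)\<close>
  levels increase by about \<open>\<epsilon>\<close> per step, up to a penalty from the small set where the drift
  falls below \<open>\<epsilon>\<close>. Pairing level \<open>j\<close> with level \<open>j + m(v)/2\<close>, the two means differ by at least
  \<open>\<epsilon>c/(8\<phi>(n))\<close>, so one of them is at distance \<open>\<epsilon>c/(16\<phi>(n))\<close> from \<open>\<mu>\<close>, and by Jensen's
  inequality that level contributes at least \<open>\<Phi>\<close> of this distance times its probability, which
  is at least \<open>\<phi>(v) P(V = v)\<close>. The \<open>m(v)/2\<close> pairs give \<open>c/4 \<cdot> P(V = v) \<cdot> \<Phi>(\<epsilon>c/(16\<phi>(n)))\<close> per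
  fibre, and by Markov's inequality the fibres with a small penalty carry probability at
  least \<open>b\<^sub>o/2\<close>.\<close>

lemma telescoping_gap_ge:
  fixes \<alpha> \<beta> :: "nat \<Rightarrow> real"
  assumes step: "\<And>j. j < n \<Longrightarrow> \<alpha> (Suc j) - \<alpha> j \<ge> e - K * \<beta> j"
    and \<beta>_nonneg: "\<And>j. j < n \<Longrightarrow> \<beta> j \<ge> 0" and "K \<ge> 0" and "i + k \<le> n"
  shows "\<alpha> (i + k) - \<alpha> i \<ge> real k * e - K * (\<Sum>j<n. \<beta> j)"
proof -
  have "(\<Sum>j\<in>{i..<i + k}. \<beta> j) \<le> (\<Sum>j<n. \<beta> j)"
    using assms by (intro sum_mono2) auto
  hence "real k * e - K * (\<Sum>j<n. \<beta> j) \<le> (\<Sum>j\<in>{i..<i + k}. e - K * \<beta> j)"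
    using \<open>K \<ge> 0\<close> by (simp add: sum_subtractf sum_distrib_left[symmetric] mult_left_mono)
  also have "\<dots> \<le> (\<Sum>j\<in>{i..<i + k}. \<alpha> (Suc j) - \<alpha> j)"
    using assms by (intro sum_mono step) auto
  also have "\<dots> = \<alpha> (i + k) - \<alpha> i"
    by (rule sum_Suc_diff') simp
  finally show ?thesis .
qed

text \<open>If \<open>\<alpha>\<close> rises by at least \<open>2T\<close> over every stretch of length \<open>k\<close>, then in each pair
  \<open>i, i + k\<close> one of the two values is at distance \<open>T\<close> from \<open>\<mu>\<close>.\<close>
lemma sum_weighted_deviation_ge_pairs:
  fixes \<alpha> \<pi> :: "nat \<Rightarrow> real" and \<Phi> :: "real \<Rightarrow> real"
  assumes "2 * k \<le> n" and gap: "\<And>i. i < k \<Longrightarrow> \<alpha> (i + k) - \<alpha> i \<ge> 2 * T"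
    and \<pi>_ge: "\<And>j. j < n \<Longrightarrow> \<pi> j \<ge> q" and "q \<ge> 0" and "T \<ge> 0"
    and \<Phi>_mono: "mono_on {0..} \<Phi>" and \<Phi>_nonneg: "\<And>x. x \<ge> 0 \<Longrightarrow> \<Phi> x \<ge> 0"
  shows "(\<Sum>j<n. \<pi> j * \<Phi> \<bar>\<alpha> j - \<mu>\<bar>) \<ge> real k * q * \<Phi> T"
proof -
  define F where "F j = \<pi> j * \<Phi> \<bar>\<alpha> j - \<mu>\<bar>" for j
  have F_nonneg: "F j \<ge> 0" if "j < n" for j
    using \<pi>_ge[OF that] \<open>q \<ge> 0\<close> \<Phi>_nonneg by (simp add: F_def)
  have pair: "F i + F (i + k) \<ge> q * \<Phi> T" if "i < k" for i
  proof -
    have "\<bar>\<alpha> i - \<mu>\<bar> \<ge> T \<or> \<bar>\<alpha> (i + k) - \<mu>\<bar> \<ge> T"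
      using gap[OF that] by linarith
    hence "\<Phi> \<bar>\<alpha> i - \<mu>\<bar> \<ge> \<Phi> T \<or> \<Phi> \<bar>\<alpha> (i + k) - \<mu>\<bar> \<ge> \<Phi> T"
      using \<open>T \<ge> 0\<close> by (auto intro: mono_onD[OF \<Phi>_mono])
    hence "\<Phi> \<bar>\<alpha> i - \<mu>\<bar> + \<Phi> \<bar>\<alpha> (i + k) - \<mu>\<bar> \<ge> \<Phi> T"
      using \<Phi>_nonneg[of "\<bar>\<alpha> i - \<mu>\<bar>"] \<Phi>_nonneg[of "\<bar>\<alpha> (i + k) - \<mu>\<bar>"] by linarith
    hence "q * \<Phi> T \<le> q * \<Phi> \<bar>\<alpha> i - \<mu>\<bar> + q * \<Phi> \<bar>\<alpha> (i + k) - \<mu>\<bar>"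
      using \<open>q \<ge> 0\<close> by (simp add: distrib_left[symmetric] mult_left_mono)
    also have "\<dots> \<le> F i + F (i + k)"
      unfolding F_def using \<pi>_ge[of i] \<pi>_ge[of "i + k"] that \<open>2 * k \<le> n\<close>
      by (intro add_mono mult_right_mono \<Phi>_nonneg) auto
    finally show ?thesis .
  qed
  have "real k * q * \<Phi> T = (\<Sum>i<k. q * \<Phi> T)" by simp
  also have "\<dots> \<le> (\<Sum>i<k. F i + F (i + k))"
    by (intro sum_mono pair) simp
  also have "\<dots> = (\<Sum>j\<in>{0..<k}. F j) + (\<Sum>j\<in>{k..<k + k}. F j)"
    using sum.shift_bounds_nat_ivl[of F 0 k k] by (simp add: sum.distrib atLeast0LessThan)
  also have "\<dots> = (\<Sum>j<k + k. F j)"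
    by (simp add: sum.atLeastLessThan_concat atLeast0LessThan[symmetric])
  also have "\<dots> \<le> (\<Sum>j<n. F j)"
    using \<open>2 * k \<le> n\<close> F_nonneg by (intro sum_mono2) auto
  finally show ?thesis by (simp add: F_def)
qed

lemma convex_abs_expectation_le:
  fixes Q :: "'a pmf" and f :: "'a \<Rightarrow> real" and \<Phi> :: "real \<Rightarrow> real"
  assumes fin: "finite (set_pmf Q)"
    and \<Phi>_convex: "convex_on {0..} \<Phi>" and \<Phi>_mono: "mono_on {0..} \<Phi>"
  shows "\<Phi> \<bar>measure_pmf.expectation Q f\<bar> \<le> measure_pmf.expectation Q (\<lambda>z. \<Phi> \<bar>f z\<bar>)"
proof -
  let ?S = "set_pmf Q"
  have expectation_sum: "measure_pmf.expectation Q g = (\<Sum>z\<in>?S. pmf Q z * g z)" for g :: "'a \<Rightarrow> real"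
    using fin by (subst integral_measure_pmf_real[of ?S]) (auto simp: mult.commute)
  have "\<bar>\<Sum>z\<in>?S. pmf Q z * f z\<bar> \<le> (\<Sum>z\<in>?S. pmf Q z * \<bar>f z\<bar>)"
    by (rule order_trans[OF sum_abs]) (simp add: abs_mult)
  hence "\<Phi> \<bar>\<Sum>z\<in>?S. pmf Q z * f z\<bar> \<le> \<Phi> (\<Sum>z\<in>?S. pmf Q z * \<bar>f z\<bar>)"
    by (intro mono_onD[OF \<Phi>_mono]) (auto intro: sum_nonneg)
  also have "\<dots> \<le> (\<Sum>z\<in>?S. pmf Q z * \<Phi> \<bar>f z\<bar>)"
    using convex_on_sum[OF fin set_pmf_not_empty \<Phi>_convex, of "pmf Q" "\<lambda>z. \<bar>f z\<bar>"] fin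
    by (simp add: sum_pmf_eq_1)
  finally show ?thesis by (simp add: expectation_sum)
qed

lemma measure_mult_cond_expectation:
  fixes f :: "'a \<Rightarrow> real"
  assumes fin: "finite (set_pmf P)"
  shows "measure_pmf.prob P C * measure_pmf.expectation (cond_pmf P C) f
    = measure_pmf.expectation P (\<lambda>z. indicator C z * f z)"
proof (cases "set_pmf P \<inter> C = {}")
  case True
  hence "measure_pmf.prob P C = 0"
    by (simp add: measure_pmf_zero_iff)
  moreover have "measure_pmf.expectation P (\<lambda>z. indicator C z * f z) = 0"
    using True by (subst integral_measure_pmf_real[OF fin]) (auto intro!: sum.neutral simp: indicator_def)
  ultimately show ?thesis by simp
next
  case False
  hence "measure_pmf.prob P C > 0"
    by (auto intro: measure_pmf_posI)
  have "measure_pmf.prob P C * measure_pmf.expectation (cond_pmf P C) f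
      = measure_pmf.prob P C * (\<Sum>z\<in>set_pmf P. f z * pmf (cond_pmf P C) z)"
    using False fin by (subst integral_measure_pmf_real[OF fin]) auto
  also have "\<dots> = (\<Sum>z\<in>set_pmf P. indicator C z * f z * pmf P z)"
    using False \<open>measure_pmf.prob P C > 0\<close>
    by (auto simp: sum_distrib_left pmf_cond indicator_def intro!: sum.cong split: if_splits)
  also have "\<dots> = measure_pmf.expectation P (\<lambda>z. indicator C z * f z)"
    by (rule integral_measure_pmf_real[OF fin, symmetric]) auto
  finally show ?thesis .
qed

lemma measure_cond_pmf_eq:
  assumes "finite (set_pmf P)" "set_pmf P \<inter> C \<noteq> {}"
  shows "measure_pmf.prob (cond_pmf P C) B = measure_pmf.prob P (C \<inter> B) / measure_pmf.prob P C"
proof -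
  have "measure_pmf.prob P C * measure_pmf.prob (cond_pmf P C) B = measure_pmf.prob P (C \<inter> B)"
    using measure_mult_cond_expectation[OF assms(1), of C "indicator B"]
    by (simp add: indicator_inter_arith[symmetric])
  moreover have "measure_pmf.prob P C > 0"
    using assms(2) by (auto intro: measure_pmf_posI)
  ultimately show ?thesis by (simp add: field_simps)
qed

lemma sum_cond_expectation_le:
  fixes f :: "'a \<Rightarrow> real"
  assumes fin: "finite (set_pmf P)" and "finite I" and disj: "disjoint_family_on C I"
    and f_nonneg: "\<And>z. z \<in> set_pmf P \<Longrightarrow> f z \<ge> 0"
  shows "(\<Sum>i\<in>I. measure_pmf.prob P (C i) * measure_pmf.expectation (cond_pmf P (C i)) f)
    \<le> measure_pmf.expectation P f"
proof -
  have "(\<Sum>i\<in>I. measure_pmf.prob P (C i) * measure_pmf.expectation (cond_pmf P (C i)) f)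
      = (\<Sum>i\<in>I. measure_pmf.expectation P (\<lambda>z. indicator (C i) z * f z))"
    by (simp add: measure_mult_cond_expectation[OF fin])
  also have "\<dots> = measure_pmf.expectation P (\<lambda>z. \<Sum>i\<in>I. indicator (C i) z * f z)"
    by (simp add: integrable_measure_pmf_finite[OF fin])
  also have "\<dots> = measure_pmf.expectation P (\<lambda>z. indicator (\<Union>i\<in>I. C i) z * f z)"
    using disj \<open>finite I\<close> by (simp add: sum_distrib_right[symmetric] indicator_UN_disjoint)
  also have "\<dots> \<le> measure_pmf.expectation P f"
    using fin f_nonneg
    by (intro integral_mono_AE) (auto simp: integrable_measure_pmf_finite AE_measure_pmf_iff indicator_def)
  finally show ?thesis .
qed

lemma half_length_mult_ge:
  fixes n :: nat and \<phi> c :: real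
  assumes "0 < \<phi>" "\<phi> \<le> c / 2" "c \<le> real n * \<phi>"
  shows "real (n div 2) * \<phi> \<ge> c / 4"
proof -
  have "2 * real (n div 2) \<ge> real n - 1" by linarith
  hence "2 * (real (n div 2) * \<phi>) \<ge> real n * \<phi> - \<phi>"
    using mult_right_mono[of "real n - 1" "2 * real (n div 2)" \<phi>] assms by (simp add: algebra_simps)
  thus ?thesis using assms by linarith
qed

lemma half_length_gap_ge:
  fixes n :: nat and \<phi> s c e X :: real
  assumes "0 < \<phi>" "\<phi> \<le> s" "s \<le> c / 2" "c \<le> real n * \<phi>" "0 < e"
    and X: "X \<le> c * e / (8 * \<phi>)"
  shows "real (n div 2) * e - X \<ge> 2 * (e * c / (16 * s))"
proof -
  define k where "k = real (n div 2)"
  have half: "2 * k \<ge> real n - 1" unfolding k_def by linarith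
  have ratios: "c / \<phi> \<ge> c / s" "c / s \<ge> 2" "real n \<ge> c / \<phi>"
    using assms by (auto simp: field_simps intro!: divide_left_mono)
  define a b where "a = c / \<phi> * e" and "b = c / s * e"
  have "2 * (k * e) \<ge> a - e"
    using mult_right_mono[of "c / \<phi> - 1" "2 * k" e] half ratios \<open>0 < e\<close>
    by (simp add: a_def algebra_simps)
  moreover have "a \<ge> b" "b \<ge> 2 * e"
    unfolding a_def b_def using ratios \<open>0 < e\<close> by (intro mult_right_mono; simp)+
  moreover have "X \<le> a / 8" "2 * (e * c / (16 * s)) = b / 8"
    using X by (simp_all add: a_def b_def)
  ultimately show ?thesis
    unfolding k_def[symmetric] by linarith
qed

lemma sum_measure_fibers:
  fixes V :: "'a \<Rightarrow> 'v"
  assumes "finite S"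
  shows "(\<Sum>v\<in>S. measure_pmf.prob P ({z. V z = v} \<inter> X)) = measure_pmf.prob P ({z. V z \<in> S} \<inter> X)"
proof -
  have "{z. V z \<in> S} \<inter> X = (\<Union>v\<in>S. {z. V z = v} \<inter> X)" by auto
  moreover have "measure_pmf.prob P (\<Union>v\<in>S. {z. V z = v} \<inter> X)
      = (\<Sum>v\<in>S. measure_pmf.prob P ({z. V z = v} \<inter> X))"
    using assms by (intro measure_pmf.finite_measure_finite_Union) (auto simp: disjoint_family_on_def)
  ultimately show ?thesis by simp
qed

text \<open>Assumptions (A1)--(A4) for a single \<open>n\<close>, with \<open>\<delta> = \<Delta>\<^sub>n\<close>.\<close>
locale drift_ladders =
  fixes P :: "'z pmf" and Z :: "'z set" and R :: "('z \<Rightarrow> 'z) pmf" and L :: "'z \<Rightarrow> real"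
    and U :: "'z \<Rightarrow> int" and V :: "'z \<Rightarrow> 'v" and VV :: "'v set"
    and u0 :: "'v \<Rightarrow> int" and m :: "'v \<Rightarrow> nat" and phi :: "'v \<Rightarrow> real"
    and eps A \<delta> c :: real
  assumes finite_Z: "finite Z" and set_pmf_subset: "set_pmf P \<subseteq> Z"
    and R_maps: "\<And>r. r \<in> set_pmf R \<Longrightarrow> r ` Z \<subseteq> Z"
    and eps_pos: "eps > 0"
    and drift_large: "measure_pmf.prob P {z. measure_pmf.expectation R (\<lambda>r. L (r z) - L z) \<ge> eps}
      \<ge> 1 - \<delta>"
    and increment_bounded: "\<And>z r. z \<in> Z \<Longrightarrow> r \<in> set_pmf R \<Longrightarrow> L (r z) - L z \<ge> - A"
    and VV_support: "VV \<subseteq> set_pmf (map_pmf V P)"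
    and level_step: "\<And>v u. v \<in> VV \<Longrightarrow> u \<in> {u0 v + 1 .. u0 v + int (m v)} \<Longrightarrow>
      bind_pmf (cond_pmf P {z. U z = u \<and> V z = v}) (\<lambda>z. map_pmf (\<lambda>r. r z) R)
        = cond_pmf P {z. U z = u + 1 \<and> V z = v}"
    and phi_pos: "\<And>v. v \<in> VV \<Longrightarrow> phi v > 0"
    and level_ratio_ge: "\<And>v u. v \<in> VV \<Longrightarrow> u \<in> {u0 v + 1 .. u0 v + int (m v)} \<Longrightarrow>
      measure_pmf.prob P {z. U z = u \<and> V z = v} / measure_pmf.prob P {z. V z = v} \<ge> phi v"
    and ladder_long: "\<And>v. v \<in> VV \<Longrightarrow> real (m v) \<ge> c / phi v"
    and c_pos: "c > 0"
begin

definition drift :: "'z \<Rightarrow> real" where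
  "drift z = measure_pmf.expectation R (\<lambda>r. L (r z) - L z)"

definition bad :: "'z set" where
  "bad = {z. drift z < eps}"

definition K :: real where
  "K = max 0 (eps + A)"

definition fiber :: "'v \<Rightarrow> 'z set" where
  "fiber v = {z. V z = v}"

definition level :: "'v \<Rightarrow> nat \<Rightarrow> 'z set" where
  "level v j = {z. U z = u0 v + 1 + int j \<and> V z = v}"

definition good_fibers :: "'v set" where
  "good_fibers = {v \<in> VV. K * measure_pmf.prob P (fiber v \<inter> bad)
    \<le> c * eps / 8 * measure_pmf.prob P (fiber v)}"

definition level_mean :: "'v \<Rightarrow> nat \<Rightarrow> real" where
  "level_mean v j = measure_pmf.expectation (cond_pmf P (level v j)) L"

lemma finite_support: "finite (set_pmf P)"
  using finite_subset[OF set_pmf_subset finite_Z] .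

lemma finite_VV: "finite VV"
  using VV_support finite_support by (auto intro: finite_subset)

lemma phi_le_Sup: "v \<in> VV \<Longrightarrow> phi v \<le> (SUP v\<in>VV. phi v)"
  using finite_VV by (intro cSUP_upper) auto

lemma Sup_phi_pos: "VV \<noteq> {} \<Longrightarrow> (SUP v\<in>VV. phi v) > 0"
  using phi_le_Sup phi_pos by (metis ex_in_conv order_less_le_trans)

lemma finite_support_step: "z \<in> Z \<Longrightarrow> finite (set_pmf (map_pmf (\<lambda>r. r z) R))"
  using R_maps by (auto intro: finite_subset[OF _ finite_Z])

lemma drift_eq: "z \<in> Z \<Longrightarrow> drift z = measure_pmf.expectation R (\<lambda>r. L (r z)) - L z"
  using integrable_measure_pmf_finite[OF finite_support_step, of z L]
  by (simp add: drift_def Bochner_Integration.integral_diff)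

lemma drift_ge_penalty: "z \<in> Z \<Longrightarrow> drift z \<ge> eps - K * indicator bad z"
proof -
  assume "z \<in> Z"
  hence "drift z \<ge> - A"
    unfolding drift_def using integrable_measure_pmf_finite[OF finite_support_step, of z L]
    by (intro measure_pmf.integral_ge_const)
       (auto simp: AE_measure_pmf_iff increment_bounded Bochner_Integration.integral_diff)
  thus ?thesis by (auto simp: bad_def K_def indicator_def)
qed

lemma K_nonneg: "K \<ge> 0"
  by (simp add: K_def)

lemma prob_bad_le: "measure_pmf.prob P bad \<le> \<delta>"
proof -
  have "measure_pmf.prob P bad = 1 - measure_pmf.prob P {z. drift z \<ge> eps}"
    using measure_pmf.prob_compl[of "{z. drift z \<ge> eps}"]
    by (simp add: bad_def Compl_eq_Diff_UNIV[symmetric] not_le Collect_neg_eq[symmetric])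
  thus ?thesis using drift_large by (simp add: drift_def)
qed

lemma expectation_after_step:
  assumes "set_pmf Q \<subseteq> Z"
  shows "measure_pmf.expectation (bind_pmf Q (\<lambda>z. map_pmf (\<lambda>r. r z) R)) L
    = measure_pmf.expectation Q (\<lambda>z. L z + drift z)"
proof -
  have "measure_pmf.expectation (bind_pmf Q (\<lambda>z. map_pmf (\<lambda>r. r z) R)) L
      = (\<Sum>z\<in>Z. pmf Q z * measure_pmf.expectation R (\<lambda>r. L (r z)))"
    using assms finite_support_step by (subst pmf_expectation_bind[OF finite_Z]) auto
  also have "\<dots> = (\<Sum>z\<in>Z. (L z + drift z) * pmf Q z)"
    by (intro sum.cong) (simp_all add: drift_eq)
  also have "\<dots> = measure_pmf.expectation Q (\<lambda>z. L z + drift z)"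
    using assms by (intro integral_measure_pmf_real[symmetric] finite_Z) auto
  finally show ?thesis .
qed

lemma prob_fiber_pos: "v \<in> VV \<Longrightarrow> measure_pmf.prob P (fiber v) > 0"
  using VV_support by (auto simp: fiber_def intro: measure_pmf_posI)

lemma prob_level_ge:
  assumes "v \<in> VV" "j < m v"
  shows "measure_pmf.prob P (level v j) \<ge> phi v * measure_pmf.prob P (fiber v)"
  using level_ratio_ge[of v "u0 v + 1 + int j"] assms prob_fiber_pos[OF assms(1)]
  by (simp add: level_def fiber_def field_simps)

lemma level_nonempty:
  assumes "v \<in> VV" "j < m v"
  shows "set_pmf P \<inter> level v j \<noteq> {}"
proof -
  have "measure_pmf.prob P (level v j) > 0"
    using prob_level_ge[OF assms] phi_pos[OF assms(1)] prob_fiber_pos[OF assms(1)]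
    by (smt (verit) mult_pos_pos)
  thus ?thesis
    unfolding measure_pmf_zero_iff[symmetric] by simp
qed

lemma level_mean_step:
  assumes "v \<in> VV" "j < m v"
  shows "level_mean v (Suc j) - level_mean v j
    \<ge> eps - K * measure_pmf.prob (cond_pmf P (level v j)) bad"
proof -
  define Q where "Q = cond_pmf P (level v j)"
  have Q_support: "set_pmf Q \<subseteq> Z" and Q_finite: "finite (set_pmf Q)"
    using level_nonempty[OF assms(1,2)] set_pmf_subset finite_support
    by (auto simp: Q_def intro: finite_subset)
  have "bind_pmf Q (\<lambda>z. map_pmf (\<lambda>r. r z) R) = cond_pmf P (level v (Suc j))"
    using level_step[of v "u0 v + 1 + int j"] assms by (simp add: Q_def level_def add_ac)
  hence "measure_pmf.expectation (cond_pmf P (level v (Suc j))) L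
      = measure_pmf.expectation Q L + measure_pmf.expectation Q drift"
    using expectation_after_step[OF Q_support]
    by (simp add: Bochner_Integration.integral_add integrable_measure_pmf_finite[OF Q_finite])
  moreover have "measure_pmf.expectation Q drift
      \<ge> measure_pmf.expectation Q (\<lambda>z. eps - K * indicator bad z)"
    using Q_support drift_ge_penalty
    by (intro integral_mono_AE) (auto simp: integrable_measure_pmf_finite[OF Q_finite] AE_measure_pmf_iff)
  moreover have "measure_pmf.expectation Q (\<lambda>z. eps - K * indicator bad z)
      = eps - K * measure_pmf.prob Q bad"
    by (simp add: Bochner_Integration.integral_diff integrable_measure_pmf_finite[OF Q_finite])
  ultimately show ?thesis
    by (simp add: level_mean_def Q_def)
qed

lemma sum_prob_bad_given_level_le:
  assumes "v \<in> VV"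
  shows "(\<Sum>j<m v. measure_pmf.prob (cond_pmf P (level v j)) bad)
    \<le> measure_pmf.prob P (fiber v \<inter> bad) / (phi v * measure_pmf.prob P (fiber v))"
proof -
  let ?q = "phi v * measure_pmf.prob P (fiber v)"
  have q_pos: "?q > 0"
    using phi_pos[OF assms] prob_fiber_pos[OF assms] by simp
  have "(\<Sum>j<m v. measure_pmf.prob (cond_pmf P (level v j)) bad)
      \<le> (\<Sum>j<m v. measure_pmf.prob P (level v j \<inter> bad) / ?q)"
  proof (intro sum_mono)
    fix j assume "j \<in> {..<m v}"
    hence "measure_pmf.prob (cond_pmf P (level v j)) bad
        = measure_pmf.prob P (level v j \<inter> bad) / measure_pmf.prob P (level v j)"
      using assms by (simp add: measure_cond_pmf_eq finite_support level_nonempty)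
    also have "\<dots> \<le> measure_pmf.prob P (level v j \<inter> bad) / ?q"
    proof -
      have "?q \<le> measure_pmf.prob P (level v j)"
        using prob_level_ge[OF assms] \<open>j \<in> {..<m v}\<close> by simp
      thus ?thesis
        using q_pos by (intro divide_left_mono) simp_all
    qed
    finally show "measure_pmf.prob (cond_pmf P (level v j)) bad
        \<le> measure_pmf.prob P (level v j \<inter> bad) / ?q" .
  qed
  also have "\<dots> = measure_pmf.prob P (\<Union>j<m v. level v j \<inter> bad) / ?q"
    unfolding sum_divide_distrib[symmetric]
    by (subst measure_pmf.finite_measure_finite_Union) (auto simp: disjoint_family_on_def level_def)
  also have "\<dots> \<le> measure_pmf.prob P (fiber v \<inter> bad) / ?q"
    using q_pos by (intro divide_right_mono measure_pmf.finite_measure_mono)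
      (auto simp: level_def fiber_def)
  finally show ?thesis .
qed

lemma level_mean_gap_ge:
  assumes "v \<in> good_fibers" and s: "phi v \<le> s" "s \<le> c / 2" and i: "i < m v div 2"
  shows "level_mean v (i + m v div 2) - level_mean v i \<ge> 2 * (eps * c / (16 * s))"
proof -
  have v: "v \<in> VV" and good: "K * measure_pmf.prob P (fiber v \<inter> bad)
      \<le> c * eps / 8 * measure_pmf.prob P (fiber v)"
    using \<open>v \<in> good_fibers\<close> by (simp_all add: good_fibers_def)
  define \<beta> where "\<beta> j = measure_pmf.prob (cond_pmf P (level v j)) bad" for j
  let ?pv = "measure_pmf.prob P (fiber v)"
  have pv_pos: "?pv > 0" and phi_v: "phi v > 0"
    using prob_fiber_pos[OF v] phi_pos[OF v] by simp_all
  have "K * (\<Sum>j<m v. \<beta> j) \<le> K * (measure_pmf.prob P (fiber v \<inter> bad) / (phi v * ?pv))"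
    unfolding \<beta>_def by (intro mult_left_mono sum_prob_bad_given_level_le v K_nonneg)
  also have "\<dots> \<le> c * eps / (8 * phi v)"
    using good pv_pos phi_v by (simp add: field_simps)
  finally have penalty: "K * (\<Sum>j<m v. \<beta> j) \<le> c * eps / (8 * phi v)" .
  have "c \<le> real (m v) * phi v"
    using ladder_long[OF v] phi_v by (simp add: field_simps)
  from half_length_gap_ge[OF phi_v s this eps_pos penalty]
  have "real (m v div 2) * eps - K * (\<Sum>j<m v. \<beta> j) \<ge> 2 * (eps * c / (16 * s))" .
  moreover have "level_mean v (i + m v div 2) - level_mean v i
      \<ge> real (m v div 2) * eps - K * (\<Sum>j<m v. \<beta> j)"
    using i level_mean_step[OF v]
    by (intro telescoping_gap_ge[where \<alpha>="level_mean v" and \<beta>=\<beta>]) (auto simp: \<beta>_def K_nonneg)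
  ultimately show ?thesis by linarith
qed

lemma level_mean_deviation_le:
  fixes \<Phi> :: "real \<Rightarrow> real"
  assumes "v \<in> VV" "j < m v" and "convex_on {0..} \<Phi>" "mono_on {0..} \<Phi>"
  shows "\<Phi> \<bar>level_mean v j - \<mu>\<bar>
    \<le> measure_pmf.expectation (cond_pmf P (level v j)) (\<lambda>z. \<Phi> \<bar>L z - \<mu>\<bar>)"
proof -
  have fin: "finite (set_pmf (cond_pmf P (level v j)))"
    using assms level_nonempty finite_support by (auto intro: finite_subset)
  have "level_mean v j - \<mu> = measure_pmf.expectation (cond_pmf P (level v j)) (\<lambda>z. L z - \<mu>)"
    by (simp add: level_mean_def Bochner_Integration.integral_diff integrable_measure_pmf_finite[OF fin])
  thus ?thesis
    using convex_abs_expectation_le[OF fin assms(3,4), of "\<lambda>z. L z - \<mu>"] by simp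
qed

lemma fiber_deviation_ge:
  fixes \<Phi> :: "real \<Rightarrow> real"
  assumes good: "v \<in> good_fibers" and s: "phi v \<le> s" "s \<le> c / 2"
    and \<Phi>_convex: "convex_on {0..} \<Phi>" and \<Phi>_mono: "mono_on {0..} \<Phi>"
    and \<Phi>_nonneg: "\<And>x. x \<ge> 0 \<Longrightarrow> \<Phi> x \<ge> 0"
  shows "(\<Sum>j<m v. measure_pmf.prob P (level v j)
      * measure_pmf.expectation (cond_pmf P (level v j)) (\<lambda>z. \<Phi> \<bar>L z - \<mu>\<bar>))
    \<ge> c / 4 * measure_pmf.prob P (fiber v) * \<Phi> (eps * c / (16 * s))"
proof -
  have v: "v \<in> VV"
    using good by (simp add: good_fibers_def)
  define T where "T = eps * c / (16 * s)"
  define k where "k = m v div 2"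
  let ?pv = "measure_pmf.prob P (fiber v)"
  have pv_pos: "?pv > 0" and phi_v: "phi v > 0"
    using prob_fiber_pos[OF v] phi_pos[OF v] by simp_all
  have T_nonneg: "T \<ge> 0"
    using eps_pos c_pos phi_v s by (simp add: T_def)
  have "real k * phi v \<ge> c / 4"
    unfolding k_def using phi_v s ladder_long[OF v]
    by (intro half_length_mult_ge) (simp_all add: field_simps)
  hence "c / 4 * (?pv * \<Phi> T) \<le> real k * phi v * (?pv * \<Phi> T)"
    using pv_pos \<Phi>_nonneg[OF T_nonneg] by (intro mult_right_mono) auto
  also have "\<dots> = real k * (phi v * ?pv) * \<Phi> T"
    by (simp add: mult_ac)
  also have "\<dots> \<le> (\<Sum>j<m v. measure_pmf.prob P (level v j) * \<Phi> \<bar>level_mean v j - \<mu>\<bar>)"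
    using level_mean_gap_ge[OF good s] prob_level_ge[OF v] phi_v pv_pos
    by (intro sum_weighted_deviation_ge_pairs T_nonneg \<Phi>_mono \<Phi>_nonneg)
      (auto simp: k_def T_def add.commute)
  also have "\<dots> \<le> (\<Sum>j<m v. measure_pmf.prob P (level v j)
      * measure_pmf.expectation (cond_pmf P (level v j)) (\<lambda>z. \<Phi> \<bar>L z - \<mu>\<bar>))"
    using level_mean_deviation_le[OF v _ \<Phi>_convex \<Phi>_mono]
    by (intro sum_mono mult_left_mono) auto
  finally show ?thesis
    by (simp add: T_def mult_ac)
qed

lemma good_fibers_mass:
  assumes bo: "measure_pmf.prob P {z. V z \<in> VV} \<ge> bo" and K_\<delta>: "K * \<delta> \<le> c * eps * bo / 16"
  shows "(\<Sum>v\<in>good_fibers. measure_pmf.prob P (fiber v)) \<ge> bo / 2"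
proof -
  let ?good = good_fibers
  let ?pv = "\<lambda>v. measure_pmf.prob P (fiber v)"
  have "c * eps / 8 * (\<Sum>v\<in>VV - ?good. ?pv v) \<le> (\<Sum>v\<in>VV - ?good. K * measure_pmf.prob P (fiber v \<inter> bad))"
    unfolding sum_distrib_left by (intro sum_mono) (auto simp: good_fibers_def)
  also have "\<dots> = K * measure_pmf.prob P ({z. V z \<in> VV - ?good} \<inter> bad)"
    using finite_VV by (simp add: sum_distrib_left[symmetric] fiber_def sum_measure_fibers)
  also have "\<dots> \<le> K * \<delta>"
    using prob_bad_le measure_pmf.finite_measure_mono[of "{z. V z \<in> VV - ?good} \<inter> bad" bad P]
    by (intro mult_left_mono K_nonneg) auto
  also have "\<dots> \<le> c * eps / 8 * (bo / 2)"
    using K_\<delta> by simp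
  finally have "(\<Sum>v\<in>VV - ?good. ?pv v) \<le> bo / 2"
    using c_pos eps_pos by (simp add: mult_le_cancel_left_pos)
  moreover have "(\<Sum>v\<in>VV. ?pv v) \<ge> bo"
    using sum_measure_fibers[OF finite_VV, of P V UNIV] bo by (simp add: fiber_def)
  moreover have "(\<Sum>v\<in>VV. ?pv v) = (\<Sum>v\<in>VV - ?good. ?pv v) + (\<Sum>v\<in>?good. ?pv v)"
    by (rule sum.subset_diff) (auto simp: good_fibers_def finite_VV)
  ultimately show ?thesis by linarith
qed

lemma expectation_deviation_ge:
  fixes \<Phi> :: "real \<Rightarrow> real"
  assumes s: "s > 0" "\<And>v. v \<in> VV \<Longrightarrow> phi v \<le> s" "s \<le> c / 2"
    and \<Phi>_convex: "convex_on {0..} \<Phi>" and \<Phi>_mono: "mono_on {0..} \<Phi>"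
    and \<Phi>_nonneg: "\<And>x. x \<ge> 0 \<Longrightarrow> \<Phi> x \<ge> 0"
    and bo: "measure_pmf.prob P {z. V z \<in> VV} \<ge> bo" and K_\<delta>: "K * \<delta> \<le> c * eps * bo / 16"
  shows "measure_pmf.expectation P (\<lambda>z. \<Phi> \<bar>L z - \<mu>\<bar>) \<ge> \<Phi> (eps * c / (16 * s)) * (bo * c / 8)"
proof -
  let ?good = good_fibers
  define T where "T = eps * c / (16 * s)"
  let ?F = "\<lambda>z. \<Phi> \<bar>L z - \<mu>\<bar>"
  let ?lvl = "\<lambda>v j. measure_pmf.prob P (level v j) * measure_pmf.expectation (cond_pmf P (level v j)) ?F"
  have finite_good: "finite ?good"
    using finite_VV by (simp add: good_fibers_def)
  have "\<Phi> T \<ge> 0"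
    using \<Phi>_nonneg s eps_pos c_pos by (simp add: T_def)
  have "\<Phi> T * (bo * c / 8) = c / 4 * (bo / 2) * \<Phi> T"
    by simp
  also have "\<dots> \<le> c / 4 * (\<Sum>v\<in>?good. measure_pmf.prob P (fiber v)) * \<Phi> T"
    using good_fibers_mass[OF bo K_\<delta>] c_pos \<open>\<Phi> T \<ge> 0\<close> by (intro mult_right_mono mult_left_mono) auto
  also have "\<dots> = (\<Sum>v\<in>?good. c / 4 * measure_pmf.prob P (fiber v) * \<Phi> T)"
    by (simp add: sum_distrib_left sum_distrib_right)
  also have "\<dots> \<le> (\<Sum>v\<in>?good. \<Sum>j<m v. ?lvl v j)"
    unfolding T_def using s
    by (intro sum_mono fiber_deviation_ge \<Phi>_convex \<Phi>_mono \<Phi>_nonneg) (auto simp: good_fibers_def)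
  also have "\<dots> = (\<Sum>(v, j)\<in>Sigma ?good (\<lambda>v. {..<m v}). ?lvl v j)"
    using finite_good by (simp add: sum.Sigma)
  also have "\<dots> \<le> measure_pmf.expectation P ?F"
  proof -
    have disj: "disjoint_family_on (\<lambda>(v, j). level v j) (Sigma ?good (\<lambda>v. {..<m v}))"
      by (auto simp: disjoint_family_on_def level_def)
    show ?thesis
      using sum_cond_expectation_le[OF finite_support _ disj, of ?F] finite_good \<Phi>_nonneg
      by (simp add: split_def)
  qed
  finally show ?thesis by (simp add: T_def)
qed

end

theorem theorem2p1:
  fixes PZ :: "nat \<Rightarrow> 'z pmf" and ZZ :: "nat \<Rightarrow> 'z set" and L :: "nat \<Rightarrow> 'z \<Rightarrow> real"
    and R :: "nat \<Rightarrow> ('z \<Rightarrow> 'z) pmf"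
    and uf :: "nat \<Rightarrow> 'z \<Rightarrow> int" and vf :: "nat \<Rightarrow> 'z \<Rightarrow> int ^ 'd"
    and eps :: real and \<Delta> :: "nat \<Rightarrow> real" and A :: real
    and VV :: "nat \<Rightarrow> (int ^ 'd) set" and u0 :: "nat \<Rightarrow> int ^ 'd \<Rightarrow> int"
    and m :: "nat \<Rightarrow> int ^ 'd \<Rightarrow> nat"
    and n1 :: nat and c :: real and phi :: "nat \<Rightarrow> int ^ 'd \<Rightarrow> real"
    and \<Phi> :: "real \<Rightarrow> real" and \<mu> :: "nat \<Rightarrow> real" and bo :: real
  assumes finZ: "\<forall>n. finite (ZZ n) \<and> set_pmf (PZ n) \<subseteq> ZZ n"
    and Rmap: "\<forall>n. \<forall>r\<in>set_pmf (R n). r ` ZZ n \<subseteq> ZZ n"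
    and A1_eps: "eps > 0"
    and A1_Delta: "\<Delta> \<longlonglongrightarrow> 0"
    and A1: "\<forall>n. measure_pmf.prob (PZ n)
               {z. measure_pmf.expectation (R n) (\<lambda>r. L n (r z) - L n z) \<ge> eps} \<ge> 1 - \<Delta> n"
    and A2: "\<forall>n. \<forall>z\<in>ZZ n. \<forall>r\<in>set_pmf (R n). L n (r z) - L n z \<ge> - A"
    and A3_V: "\<forall>n. VV n \<subseteq> set_pmf (map_pmf (vf n) (PZ n))"
    and A3_U: "\<forall>n. \<forall>v\<in>VV n. \<forall>u\<in>{u0 n v + 1 .. u0 n v + int (m n v)}.
                 (u, v) \<in> set_pmf (map_pmf (\<lambda>z. (uf n z, vf n z)) (PZ n))"
    and A3: "\<forall>n. \<forall>v\<in>VV n. \<forall>u\<in>{u0 n v + 1 .. u0 n v + int (m n v)}.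
                 (u + 1, v) \<in> set_pmf (map_pmf (\<lambda>z. (uf n z, vf n z)) (PZ n)) \<and>
                 bind_pmf (cond_pmf (PZ n) {z. uf n z = u \<and> vf n z = v})
                          (\<lambda>z. map_pmf (\<lambda>r. r z) (R n))
                   = cond_pmf (PZ n) {z. uf n z = u + 1 \<and> vf n z = v}"
    and A4_c: "c > 0"
    and A4: "\<forall>n\<ge>n1. \<forall>v\<in>VV n. phi n v > 0 \<and>
               (\<forall>u\<in>{u0 n v + 1 .. u0 n v + int (m n v)}.
                  measure_pmf.prob (PZ n) {z. uf n z = u \<and> vf n z = v}
                    / measure_pmf.prob (PZ n) {z. vf n z = v} \<ge> phi n v) \<and>
               real (m n v) \<ge> c / phi n v"
    and phi_lim: "(\<lambda>n. SUP v\<in>VV n. phi n v) \<longlonglongrightarrow> 0"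
    and Phi_convex: "convex_on {0..} \<Phi>"
    and Phi_mono: "mono_on {0..} \<Phi>"
    and Phi_nonneg: "\<forall>x\<ge>0. \<Phi> x \<ge> 0"
    and bo_pos: "bo > 0"
    and bo: "eventually (\<lambda>n. measure_pmf.prob (PZ n) {z. vf n z \<in> VV n} \<ge> bo) sequentially"
  shows "\<forall>co. 0 < co \<and> co < bo * c / 8 \<longrightarrow>
           eventually (\<lambda>n. measure_pmf.expectation (PZ n) (\<lambda>z. \<Phi> \<bar>L n z - \<mu> n\<bar>)
              \<ge> \<Phi> (eps * c / (16 * (SUP v\<in>VV n. phi n v))) * co) sequentially"
proof (intro allI impI)
  fix co assume co: "0 < co \<and> co < bo * c / 8"
  have "c / 2 > 0" and "c * eps * bo / 16 > 0"
    using A4_c A1_eps bo_pos by simp_all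
  have large: "eventually (\<lambda>n. n \<ge> n1 \<and> (SUP v\<in>VV n. phi n v) < c / 2
      \<and> max 0 (eps + A) * \<Delta> n < c * eps * bo / 16
      \<and> measure_pmf.prob (PZ n) {z. vf n z \<in> VV n} \<ge> bo) sequentially" (is "eventually ?large _")
    using eventually_ge_at_top[of n1] order_tendstoD(2)[OF phi_lim \<open>c / 2 > 0\<close>]
      order_tendstoD(2)[OF tendsto_mult_right_zero[OF A1_Delta] \<open>c * eps * bo / 16 > 0\<close>] bo
    by eventually_elim auto
  have "measure_pmf.expectation (PZ n) (\<lambda>z. \<Phi> \<bar>L n z - \<mu> n\<bar>)
      \<ge> \<Phi> (eps * c / (16 * (SUP v\<in>VV n. phi n v))) * co" if n: "?large n" for n
  proof -
    interpret drift_ladders "PZ n" "ZZ n" "R n" "L n" "uf n" "vf n" "VV n" "u0 n" "m n" "phi n"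
      eps A "\<Delta> n" c
      using finZ Rmap A1_eps A1 A2 A3_V A3 A4 A4_c n by unfold_locales auto
    have "VV n \<noteq> {}"
      using n bo_pos by auto
    hence "measure_pmf.expectation (PZ n) (\<lambda>z. \<Phi> \<bar>L n z - \<mu> n\<bar>)
        \<ge> \<Phi> (eps * c / (16 * (SUP v\<in>VV n. phi n v))) * (bo * c / 8)"
      using n Phi_nonneg
      by (intro expectation_deviation_ge Sup_phi_pos phi_le_Sup Phi_convex Phi_mono) (auto simp: K_def)
    moreover have "\<Phi> (eps * c / (16 * (SUP v\<in>VV n. phi n v))) \<ge> 0"
      using Phi_nonneg A1_eps A4_c Sup_phi_pos[OF \<open>VV n \<noteq> {}\<close>] by simp
    ultimately show ?thesis
      using co by (smt (verit) mult_left_mono)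
  qed
  with large show "eventually (\<lambda>n. measure_pmf.expectation (PZ n) (\<lambda>z. \<Phi> \<bar>L n z - \<mu> n\<bar>)
      \<ge> \<Phi> (eps * c / (16 * (SUP v\<in>VV n. phi n v))) * co) sequentially"
    by (rule eventually_mono)
qed

end
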